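(* Let $\Gamma$ be a simple graph with $n$ vertices having exactly $m$ universal vertices, where $1\leqslant m<n$. Then the number $\kappa(\Gamma)$ of spanning trees of $\Gamma$ is divisible by $n^{m-1}$.
   Context: A universal vertex of a graph is a vertex adjacent to all other vertices. *)

theory Defs
  imports Main
begin

definition simple_graph :: "'a set \<Rightarrow> 'a set set \<Rightarrow> bool" where
  "simple_graph V E \<longleftrightarrow> finite V \<and> (\<forall>e\<in>E. e \<subseteq> V \<and> card e = 2)"

definition universal_vertex :: "'a set \<Rightarrow> 'a set set \<Rightarrow> 'a \<Rightarrow> bool" where
  "universal_vertex V E v \<longleftrightarrow> v \<in> V \<and> (\<forall>u\<in>V. u \<noteq> v \<longrightarrow> {u, v} \<in> E)"

definition connected_graph :: "'a set \<Rightarrow> 'a set set \<Rightarrow> bool" where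
  "connected_graph V E \<longleftrightarrow> V \<noteq> {} \<and>
     (\<forall>u\<in>V. \<forall>v\<in>V. (u, v) \<in> {(x, y). {x, y} \<in> E}\<^sup>*)"

definition is_cycle :: "'a set set \<Rightarrow> 'a list \<Rightarrow> bool" where
  "is_cycle E cs \<longleftrightarrow> length cs \<ge> 3 \<and> distinct cs \<and>
     (\<forall>i < length cs - 1. {cs ! i, cs ! (i + 1)} \<in> E) \<and> {last cs, hd cs} \<in> E"

definition acyclic_graph :: "'a set set \<Rightarrow> bool" where
  "acyclic_graph E \<longleftrightarrow> (\<nexists>cs. is_cycle E cs)"

definition spanning_tree :: "'a set \<Rightarrow> 'a set set \<Rightarrow> 'a set set \<Rightarrow> bool" where
  "spanning_tree V E T \<longleftrightarrow> T \<subseteq> E \<and> connected_graph V T \<and> acyclic_graph T"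

definition num_spanning_trees :: "'a set \<Rightarrow> 'a set set \<Rightarrow> nat" where
  "num_spanning_trees V E = card {T. spanning_tree V E T}"

end

theory Submission
  imports Defs "HOL-Combinatorics.Transposition"
begin

text \<open>Write F(S) for the set of spanning forests whose trees are rooted at the vertices of S, encoded
  by parent maps; spanning trees correspond to F({r}) for any vertex r. If u is a universal vertex
  outside R, cutting the parent edge of u is a bijection between F(R) and the pairs (q, y) with
  q in F(R \<union> {u}) and y outside the tree of u in q. Transposing two universal vertices is a graph
  automorphism, so if S consists of universal vertices, all roots in S are reached from equally
  many pairs (q, y); counting pairs by their root gives |S| |F(R)| = |R| n |F(S)| for S = R \<union> {u}.
  Iterating from one universal vertex to the set U of all m of them shows that m times the number
  of spanning trees is n^(m-1) |F(U)|, and the same symmetry, applied to the root reached by a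
  fixed non-universal vertex, shows that m divides |F(U)|.\<close>

definition reaches :: "('a \<Rightarrow> 'a) \<Rightarrow> 'a \<Rightarrow> 'a \<Rightarrow> bool" where
  "reaches p y x \<longleftrightarrow> (\<exists>k. (p ^^ k) y = x)"

lemma reaches_refl [simp]: "reaches p x x"
  unfolding reaches_def by (metis funpow_0)

lemma reaches_step: "reaches p (p y) x \<Longrightarrow> reaches p y x"
  unfolding reaches_def by (metis funpow_Suc_right comp_apply)

lemma reaches_trans: "reaches p x y \<Longrightarrow> reaches p y z \<Longrightarrow> reaches p x z"
  unfolding reaches_def by (metis funpow_add comp_apply)

lemma reaches_linear:
  assumes "reaches p y x1" "reaches p y x2"
  shows "reaches p x1 x2 \<or> reaches p x2 x1"
proof -
  obtain k1 k2 where k: "(p ^^ k1) y = x1" "(p ^^ k2) y = x2"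
    using assms unfolding reaches_def by blast
  have "(p ^^ (j - i)) ((p ^^ i) y) = (p ^^ j) y" if "i \<le> j" for i j
    using that by (metis comp_apply funpow_add le_add_diff_inverse2)
  then show ?thesis
    using k unfolding reaches_def by (metis nat_le_linear)
qed

lemma reaches_invariant:
  assumes "reaches p y x" "P y" "\<And>z. P z \<Longrightarrow> P (p z)"
  shows "P x"
proof -
  have "P ((p ^^ k) y)" for k
    by (induction k) (simp_all add: assms(2,3))
  then show ?thesis
    using assms(1) unfolding reaches_def by blast
qed

lemma reaches_imp_rtrancl:
  assumes "reaches p v x" "\<And>z. (z, p z) \<in> R\<^sup>*"
  shows "(v, x) \<in> R\<^sup>*"
  using assms(1)
proof (rule reaches_invariant[where P = "\<lambda>z. (v, z) \<in> R\<^sup>*"])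
  show "(v, p z) \<in> R\<^sup>*" if "(v, z) \<in> R\<^sup>*" for z
    using that assms(2) by (rule rtrancl_trans)
qed simp

lemma reaches_by_descent:
  fixes d :: "'a \<Rightarrow> nat"
  assumes descent: "\<And>v. v \<in> A \<Longrightarrow> v \<noteq> r \<Longrightarrow> p v \<in> A \<and> d (p v) < d v" and v: "v \<in> A"
  shows "reaches p v r"
  using v
proof (induction "d v" arbitrary: v rule: less_induct)
  case less
  show ?case
  proof (cases "v = r")
    case False
    with less.prems have "reaches p (p v) r"
      using descent less.hyps by blast
    then show ?thesis
      by (rule reaches_step)
  qed simp
qed

lemma funpow_fun_upd_eq:
  assumes "\<forall>i<k. (f ^^ i) v \<noteq> u"
  shows "((f(u := z)) ^^ k) v = (f ^^ k) v"
  using assms by (induction k) auto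

lemma not_reaches_fun_upd_eq:
  "\<not> reaches f v u \<Longrightarrow> ((f(u := z)) ^^ k) v = (f ^^ k) v"
  unfolding reaches_def by (blast intro: funpow_fun_upd_eq)

lemma reaches_fun_upd:
  assumes "reaches f v u"
  shows "reaches (f(u := z)) v u"
proof -
  obtain k where "(f ^^ k) v = u" "\<forall>i<k. (f ^^ i) v \<noteq> u"
    using assms exists_least_iff[of "\<lambda>k. (f ^^ k) v = u"] unfolding reaches_def by blast
  then show ?thesis
    unfolding reaches_def using funpow_fun_upd_eq by metis
qed

lemma is_cycle_iff:
  "is_cycle E cs \<longleftrightarrow> 3 \<le> length cs \<and> distinct cs \<and>
     successively (\<lambda>x y. {x, y} \<in> E) cs \<and> {last cs, hd cs} \<in> E"
  unfolding is_cycle_def successively_conv_nth by auto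

lemma is_cycle_rotate1:
  assumes "is_cycle E cs"
  shows "is_cycle E (rotate1 cs)"
proof (cases cs)
  case (Cons a xs)
  with assms have "xs \<noteq> []"
    by (auto simp: is_cycle_iff)
  with assms Cons show ?thesis
    by (auto simp: is_cycle_iff successively_append_iff successively_Cons insert_commute)
qed (use assms in \<open>simp add: is_cycle_iff\<close>)

lemma is_cycle_rotate: "is_cycle E cs \<Longrightarrow> is_cycle E (rotate n cs)"
  by (induction n) (simp_all add: is_cycle_rotate1)

lemma is_cycle_two_neighbours:
  assumes "is_cycle E cs" "z \<in> set cs"
  obtains x y where "x \<noteq> y" "x \<in> set cs" "y \<in> set cs" "{z, x} \<in> E" "{z, y} \<in> E"
proof -
  obtain i where i: "i < length cs" "cs ! i = z"
    using assms(2) by (meson in_set_conv_nth)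
  let ?cs = "rotate i cs"
  have c: "is_cycle E ?cs"
    using assms(1) by (rule is_cycle_rotate)
  then have L: "3 \<le> length ?cs" "distinct ?cs"
    unfolding is_cycle_iff by blast+
  have "?cs ! 0 = z"
    using i nth_rotate[of 0 cs i] by fastforce
  with L(1) obtain ys where cs': "?cs = z # ys"
    by (metis hd_conv_nth list.collapse list.size(3) not_numeral_le_zero)
  with L(1) obtain a b zs where ys: "ys = a # b # zs"
    by (auto simp: Suc_le_length_iff numeral_3_eq_3)
  have "{z, a} \<in> E" "{z, last (b # zs)} \<in> E"
    using c unfolding cs' ys is_cycle_iff by (simp_all add: insert_commute)
  moreover have "set cs = set (z # a # b # zs)"
    by (metis cs' set_rotate ys)
  moreover have "a \<noteq> last (b # zs)"
    using L(2) last_in_set[of "b # zs"] unfolding cs' ys by (metis distinct.simps(2) list.discI)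
  ultimately show ?thesis
    using that[of a "last (b # zs)"] by simp
qed

lemma rtrancl_imp_distinct_path:
  assumes "(x, y) \<in> R\<^sup>*"
  shows "\<exists>ps. ps \<noteq> [] \<and> hd ps = x \<and> last ps = y \<and> distinct ps \<and> successively (\<lambda>a b. (a, b) \<in> R) ps"
  using assms
proof (induction rule: converse_rtrancl_induct)
  case base
  then show ?case
    by (intro exI[of _ "[y]"]) simp
next
  case (step x z)
  then obtain ps where ps: "ps \<noteq> []" "hd ps = z" "last ps = y" "distinct ps"
    "successively (\<lambda>a b. (a, b) \<in> R) ps"
    by blast
  show ?case
  proof (cases "x \<in> set ps")
    case True
    then obtain xs ys where "ps = xs @ x # ys"
      by (meson split_list)
    with ps show ?thesis
      by (intro exI[of _ "x # ys"]) (auto simp: successively_append_iff)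
  next
    case False
    with ps step.hyps(1) show ?thesis
      by (intro exI[of _ "x # ps"]) (auto simp: successively_Cons)
  qed
qed

text \<open>Otherwise a path of \<open>T'\<close> from \<open>a\<close> to \<open>b\<close>, closed up by the edge \<open>{a, b}\<close>, would be a
  cycle of \<open>T\<close>.\<close>
lemma acyclic_edge_mem_subgraph:
  assumes acyclic: "acyclic_graph T" and sub: "T' \<subseteq> T" and e: "{a, b} \<in> T" "a \<noteq> b"
    and walk: "(a, b) \<in> {(x, y). {x, y} \<in> T'}\<^sup>*"
  shows "{a, b} \<in> T'"
proof (rule ccontr)
  assume notin: "{a, b} \<notin> T'"
  obtain ps where ps: "ps \<noteq> []" "hd ps = a" "last ps = b" "distinct ps"
    and path: "successively (\<lambda>x y. {x, y} \<in> T') ps"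
    using rtrancl_imp_distinct_path[OF walk] by auto
  have "3 \<le> length ps"
  proof (rule ccontr)
    assume "\<not> 3 \<le> length ps"
    moreover have "length ps \<noteq> 0"
      using ps(1) by simp
    ultimately have "length ps = 1 \<or> length ps = 2"
      by linarith
    then have "ps = [a, b]"
      using ps e(2) by (auto simp: length_Suc_conv numeral_2_eq_2)
    with path notin show False
      by simp
  qed
  moreover have "successively (\<lambda>x y. {x, y} \<in> T) ps"
    using path sub by (auto intro: successively_mono)
  ultimately have "is_cycle T ps"
    using ps e(1) unfolding is_cycle_iff by (simp add: insert_commute)
  with acyclic show False
    unfolding acyclic_graph_def by blast
qed

section \<open>Rooted spanning forests\<close>

lemma universal_vertex_in: "universal_vertex V E u \<Longrightarrow> u \<in> V"
  unfolding universal_vertex_def by blast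

lemma universal_edge: "universal_vertex V E u \<Longrightarrow> y \<in> V \<Longrightarrow> y \<noteq> u \<Longrightarrow> {u, y} \<in> E"
  unfolding universal_vertex_def by (metis insert_commute)

text \<open>\<open>p \<in> rooted_forests V E S\<close> is the parent map of a spanning forest of \<open>(V, E)\<close> whose trees
  are rooted at the vertices of \<open>S\<close>, one root per tree; \<open>p\<close> fixes the roots and every point
  outside \<open>V\<close>.\<close>
definition rooted_forests :: "'a set \<Rightarrow> 'a set set \<Rightarrow> 'a set \<Rightarrow> ('a \<Rightarrow> 'a) set" where
  "rooted_forests V E S = {p. (\<forall>v. v \<notin> V - S \<longrightarrow> p v = v) \<and> (\<forall>v\<in>V - S. {v, p v} \<in> E)
      \<and> (\<forall>v\<in>V. \<exists>x\<in>S. reaches p v x)}"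

lemma rooted_forestsD:
  assumes "p \<in> rooted_forests V E S"
  shows "v \<notin> V - S \<Longrightarrow> p v = v" "v \<in> V - S \<Longrightarrow> {v, p v} \<in> E"
    "v \<in> V \<Longrightarrow> \<exists>x\<in>S. reaches p v x"
  using assms unfolding rooted_forests_def by auto

lemma rooted_forest_root_fixed: "p \<in> rooted_forests V E S \<Longrightarrow> x \<in> S \<Longrightarrow> p x = x"
  by (simp add: rooted_forestsD(1))

lemma rooted_forest_root_reaches:
  assumes "p \<in> rooted_forests V E S" "x \<in> S" "reaches p x y"
  shows "y = x"
  using assms(3) by (rule reaches_invariant) (use rooted_forest_root_fixed[OF assms(1)] assms(2) in auto)

lemma rooted_forest_root_unique:
  assumes "p \<in> rooted_forests V E S" "x1 \<in> S" "x2 \<in> S" "reaches p y x1" "reaches p y x2"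
  shows "x1 = x2"
  using reaches_linear[OF assms(4,5)] rooted_forest_root_reaches[OF assms(1)] assms(2,3) by metis

lemma rooted_forest_no_cycle:
  assumes p: "p \<in> rooted_forests V E S" and u: "u \<in> V" and cyc: "reaches p (p u) u"
  shows "u \<in> S"
proof -
  obtain k where k: "(p ^^ Suc k) u = u"
    using cyc unfolding reaches_def by (metis funpow_Suc_right comp_apply)
  obtain x j where x: "x \<in> S" "(p ^^ j) u = x"
    using rooted_forestsD(3)[OF p u] unfolding reaches_def by blast
  have "(p ^^ (j mod Suc k)) u = x"
    using funpow_mod_eq[OF k, of j] x(2) by simp
  then have "(p ^^ (Suc k - j mod Suc k)) x = (p ^^ Suc k) u"
    by (metis comp_apply funpow_add le_add_diff_inverse2 less_imp_le_nat mod_less_divisor zero_less_Suc)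
  then have "reaches p x u"
    unfolding reaches_def k by blast
  then show ?thesis
    using rooted_forest_root_reaches[OF p x(1)] x(1) by blast
qed

lemma rooted_forest_no_2cycle:
  assumes p: "p \<in> rooted_forests V E S" and z: "z \<in> V - S"
  shows "p (p z) \<noteq> z"
proof
  assume "p (p z) = z"
  then have "reaches p (p z) z"
    by (metis reaches_refl reaches_step)
  with z show False
    using rooted_forest_no_cycle[OF p] by blast
qed

lemma rooted_forest_cut:
  assumes p: "p \<in> rooted_forests V E R" and u: "u \<in> V" "u \<notin> R"
  shows "p(u := u) \<in> rooted_forests V E (insert u R)" "\<not> reaches (p(u := u)) (p u) u"
proof -
  let ?q = "p(u := u)"
  have "\<exists>x\<in>insert u R. reaches ?q v x" if v: "v \<in> V" for v
  proof (cases "reaches p v u")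
    case True
    then show ?thesis using reaches_fun_upd[OF True, of u] by blast
  next
    case False
    obtain x where "x \<in> R" "reaches p v x"
      using rooted_forestsD(3)[OF p v] by blast
    then show ?thesis
      using not_reaches_fun_upd_eq[OF False] unfolding reaches_def by auto
  qed
  then show "?q \<in> rooted_forests V E (insert u R)"
    using rooted_forestsD(1,2)[OF p] unfolding rooted_forests_def by auto
  show "\<not> reaches ?q (p u) u"
  proof
    assume "reaches ?q (p u) u"
    then have "reaches (?q(u := p u)) (p u) u"
      by (rule reaches_fun_upd)
    then have "u \<in> R"
      using rooted_forest_no_cycle[OF p u(1)] by simp
    with u(2) show False ..
  qed
qed

lemma rooted_forest_join:
  assumes q: "q \<in> rooted_forests V E (insert u R)"
    and u: "u \<notin> R" "universal_vertex V E u"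
    and y: "y \<in> V" "\<not> reaches q y u"
  shows "q(u := y) \<in> rooted_forests V E R"
proof -
  let ?p = "q(u := y)"
  have "y \<noteq> u"
    using y(2) by auto
  then have edges: "{v, ?p v} \<in> E" if "v \<in> V - R" for v
    using that rooted_forestsD(2)[OF q] universal_edge[OF u(2) y(1)] by auto
  have reaches_R: "\<exists>x\<in>R. reaches ?p v x" if v: "v \<in> V" and nr: "\<not> reaches q v u" for v
  proof -
    obtain x where "x \<in> insert u R" "reaches q v x"
      using rooted_forestsD(3)[OF q v] by blast
    with nr show ?thesis
      using not_reaches_fun_upd_eq[OF nr] unfolding reaches_def by auto
  qed
  have "\<exists>x\<in>R. reaches ?p v x" if v: "v \<in> V" for v
  proof (cases "reaches q v u")
    case True
    have "reaches ?p u y"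
      by (rule reaches_step) simp
    with reaches_fun_upd[OF True] have "reaches ?p v y"
      by (rule reaches_trans)
    then show ?thesis
      using reaches_R[OF y] reaches_trans[of ?p v y] by blast
  next
    case False
    then show ?thesis using reaches_R v by blast
  qed
  with edges show ?thesis
    using rooted_forestsD(1)[OF q] u(1) universal_vertex_in[OF u(2)] unfolding rooted_forests_def by auto
qed

definition depth :: "'a \<Rightarrow> ('a \<Rightarrow> 'a) \<Rightarrow> 'a \<Rightarrow> nat" where
  "depth r p v = (LEAST k. (p ^^ k) v = r)"

lemma depth_step:
  assumes p: "p \<in> rooted_forests V E {r}" and v: "v \<in> V" "v \<noteq> r"
  shows "depth r p v = Suc (depth r p (p v))"
proof -
  obtain k where "(p ^^ k) v = r"
    using rooted_forestsD(3)[OF p v(1)] unfolding reaches_def by blast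
  then show ?thesis
    unfolding depth_def using v(2) Least_Suc[of "\<lambda>k. (p ^^ k) v = r"]
    by (simp add: funpow_Suc_right del: funpow.simps)
qed

lemma transpose_in_iff: "a \<in> A \<Longrightarrow> b \<in> A \<Longrightarrow> transpose a b z \<in> A \<longleftrightarrow> z \<in> A"
  by (auto simp: transpose_def)

locale sgraph =
  fixes V :: "'a set" and E :: "'a set set"
  assumes simple: "simple_graph V E"
begin

lemma finite_V: "finite V"
  using simple by (simp add: simple_graph_def)

lemma edge_doubleton: "e \<in> E \<Longrightarrow> \<exists>a b. e = {a, b} \<and> a \<noteq> b \<and> a \<in> V \<and> b \<in> V"
  using simple unfolding simple_graph_def by (metis card_2_iff insert_subset)

lemma edge_endpoints: "{a, b} \<in> E \<Longrightarrow> a \<noteq> b \<and> a \<in> V \<and> b \<in> V"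
  using edge_doubleton by (metis doubleton_eq_iff)

lemma rooted_forest_closed: "p \<in> rooted_forests V E S \<Longrightarrow> v \<in> V \<Longrightarrow> p v \<in> V"
  using rooted_forestsD[of _ V E] edge_endpoints by (metis DiffI)

lemma finite_rooted_forests: "finite (rooted_forests V E S)"
proof -
  let ?r = "\<lambda>p v. if v \<in> V then p v else undefined"
  have "inj_on ?r (rooted_forests V E S)"
  proof (rule inj_onI)
    fix p q assume p: "p \<in> rooted_forests V E S" and q: "q \<in> rooted_forests V E S"
      and eq: "?r p = ?r q"
    show "p = q"
    proof
      fix v show "p v = q v"
        using fun_cong[OF eq, of v] rooted_forestsD(1)[OF p, of v] rooted_forestsD(1)[OF q, of v]
        by (cases "v \<in> V") auto
    qed
  qed
  moreover have "?r ` rooted_forests V E S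
      \<subseteq> {f. \<forall>v. (v \<in> V \<longrightarrow> f v \<in> V) \<and> (v \<notin> V \<longrightarrow> f v = undefined)}"
    using rooted_forest_closed by auto
  moreover have "finite {f. \<forall>v. (v \<in> V \<longrightarrow> f v \<in> V) \<and> (v \<notin> V \<longrightarrow> f v = undefined)}"
    by (rule finite_set_of_finite_funs[OF finite_V finite_V])
  ultimately show ?thesis
    using finite_imageD finite_subset by blast
qed

section \<open>Counting forests with universal roots\<close>

text \<open>Cutting the parent edge of a universal vertex \<open>u\<close> turns it into a new root; conversely
  any vertex outside the new tree of \<open>u\<close> can serve as its parent.\<close>
lemma card_rooted_forests_eq_card_cut:
  assumes u: "u \<notin> R" "universal_vertex V E u"
  shows "card (rooted_forests V E R)
    = card {(q, y). q \<in> rooted_forests V E (insert u R) \<and> y \<in> V \<and> \<not> reaches q y u}"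
    (is "_ = card ?B")
proof (rule bij_betw_same_card)
  note uV = universal_vertex_in[OF u(2)]
  have cut: "(p(u := u), p u) \<in> ?B" if "p \<in> rooted_forests V E R" for p
    using rooted_forest_cut[OF that uV u(1)] rooted_forest_closed[OF that uV] by blast
  have join: "q(u := y) \<in> rooted_forests V E R" if "(q, y) \<in> ?B" for q y
    using that rooted_forest_join[OF _ u] by blast
  have fixed: "q(u := y, u := u) = q" if "(q, y) \<in> ?B" for q y
    using that rooted_forest_root_fixed[where x = u] by (auto simp: fun_upd_idem)
  show "bij_betw (\<lambda>p. (p(u := u), p u)) (rooted_forests V E R) ?B"
  proof (rule bij_betw_byWitness[where f' = "\<lambda>(q, y). q(u := y)"])
    show "\<forall>p\<in>rooted_forests V E R. (\<lambda>(q, y). q(u := y)) (p(u := u), p u) = p"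
      by simp
    show "\<forall>a\<in>?B. (\<lambda>p. (p(u := u), p u)) ((\<lambda>(q, y). q(u := y)) a) = a"
      using fixed by auto
    show "(\<lambda>p. (p(u := u), p u)) ` rooted_forests V E R \<subseteq> ?B"
      using cut by blast
    show "(\<lambda>(q, y). q(u := y)) ` ?B \<subseteq> rooted_forests V E R"
      using join by auto
  qed
qed

definition reaching_pairs :: "'a set \<Rightarrow> 'a set \<Rightarrow> 'a \<Rightarrow> (('a \<Rightarrow> 'a) \<times> 'a) set" where
  "reaching_pairs S Y x = {(q, y). q \<in> rooted_forests V E S \<and> y \<in> Y \<and> reaches q y x}"

lemma transpose_universal_edge:
  assumes x: "universal_vertex V E x" and u: "universal_vertex V E u" and e: "e \<in> E"
  shows "transpose x u ` e \<in> E"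
proof -
  let ?s = "transpose x u"
  obtain a b where ab: "e = {a, b}" "a \<noteq> b" "a \<in> V" "b \<in> V"
    using edge_doubleton[OF e] by blast
  note xu = universal_vertex_in[OF x] universal_vertex_in[OF u]
  have image: "?s ` e = {?s a, ?s b}" "?s a \<noteq> ?s b" "?s a \<in> V" "?s b \<in> V"
    using ab xu transpose_eq_imp_eq[of x u a b] transpose_in_iff[of x V u] by auto
  show ?thesis
  proof (cases "a \<in> {x, u} \<or> b \<in> {x, u}")
    case True
    then have "universal_vertex V E (?s a) \<or> universal_vertex V E (?s b)"
      using x u by auto
    then show ?thesis
      using universal_edge image by (metis insert_commute)
  next
    case False
    then show ?thesis
      using ab e by simp
  qed
qed

lemma funpow_conj_transpose:
  "((transpose x u \<circ> q \<circ> transpose x u) ^^ k) z = transpose x u ((q ^^ k) (transpose x u z))"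
  by (induction k arbitrary: z) auto

lemma reaches_conj_transpose:
  "reaches (transpose x u \<circ> q \<circ> transpose x u) (transpose x u y) (transpose x u z) \<longleftrightarrow> reaches q y z"
  unfolding reaches_def funpow_conj_transpose by (metis transpose_involutory)

lemma rooted_forest_conj_transpose:
  assumes x: "universal_vertex V E x" and u: "universal_vertex V E u" and xu: "x \<in> S" "u \<in> S"
    and q: "q \<in> rooted_forests V E S"
  shows "transpose x u \<circ> q \<circ> transpose x u \<in> rooted_forests V E S"
proof -
  let ?s = "transpose x u"
  have inV: "?s z \<in> V \<longleftrightarrow> z \<in> V" and inS: "?s z \<in> S \<longleftrightarrow> z \<in> S" for z
    using xu universal_vertex_in[OF x] universal_vertex_in[OF u] by (simp_all add: transpose_in_iff)
  have "{v, (?s \<circ> q \<circ> ?s) v} \<in> E" if "v \<in> V - S" for v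
    using transpose_universal_edge[OF x u rooted_forestsD(2)[OF q, of "?s v"]] that inV inS by simp
  moreover have "\<exists>r\<in>S. reaches (?s \<circ> q \<circ> ?s) v r" if v: "v \<in> V" for v
  proof -
    obtain r where "r \<in> S" "reaches q (?s v) r"
      using rooted_forestsD(3)[OF q, of "?s v"] v inV by blast
    then show ?thesis
      using reaches_conj_transpose[of x u q "?s v" r] inS by auto
  qed
  ultimately show ?thesis
    using rooted_forestsD(1)[OF q] inV inS unfolding rooted_forests_def by auto
qed

lemma card_eq_by_involution:
  assumes "\<And>a. f (f a) = a" "f ` A \<subseteq> B" "f ` B \<subseteq> A"
  shows "card A = card B"
  by (rule bij_betw_same_card[of f], rule bij_betw_byWitness[of _ f]) (use assms in auto)

text \<open>Exchanging two universal roots is a graph automorphism.\<close>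
lemma card_reaching_pairs_transpose:
  assumes x: "universal_vertex V E x" and u: "universal_vertex V E u" and xu: "x \<in> S" "u \<in> S"
    and Y: "\<And>z. transpose x u z \<in> Y \<longleftrightarrow> z \<in> Y"
  shows "card (reaching_pairs S Y x) = card (reaching_pairs S Y u)"
proof (rule card_eq_by_involution)
  let ?s = "transpose x u"
  let ?f = "\<lambda>(q, y). (?s \<circ> q \<circ> ?s, ?s y)"
  show "?f (?f a) = a" for a
    by (cases a) (simp add: fun_eq_iff)
  have "?f a \<in> reaching_pairs S Y (?s r)" if "a \<in> reaching_pairs S Y r" for a r
  proof (cases a)
    case (Pair q y)
    with that show ?thesis
      using rooted_forest_conj_transpose[OF x u xu] Y reaches_conj_transpose[of x u q y r]
      unfolding reaching_pairs_def by simp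
  qed
  from this[of _ x] this[of _ u]
  show "?f ` reaching_pairs S Y x \<subseteq> reaching_pairs S Y u"
    and "?f ` reaching_pairs S Y u \<subseteq> reaching_pairs S Y x"
    by auto
qed

lemma card_UN_reaching_pairs:
  assumes U: "\<forall>x\<in>S. universal_vertex V E x" and T: "T \<subseteq> S" "finite T" and u: "u \<in> S"
    and Y: "Y \<subseteq> V" "\<And>x x' z. x \<in> S \<Longrightarrow> x' \<in> S \<Longrightarrow> transpose x x' z \<in> Y \<longleftrightarrow> z \<in> Y"
  shows "card (\<Union>x\<in>T. reaching_pairs S Y x) = card T * card (reaching_pairs S Y u)"
proof -
  have "finite (reaching_pairs S Y x)" for x
    by (rule finite_subset[of _ "rooted_forests V E S \<times> V"])
      (use Y(1) finite_rooted_forests finite_V in \<open>auto simp: reaching_pairs_def\<close>)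
  moreover have "reaching_pairs S Y x \<inter> reaching_pairs S Y x' = {}"
    if "x \<in> T" "x' \<in> T" "x \<noteq> x'" for x x'
    using that T(1) rooted_forest_root_unique[of _ V E S] unfolding reaching_pairs_def by blast
  ultimately have "card (\<Union>x\<in>T. reaching_pairs S Y x) = (\<Sum>x\<in>T. card (reaching_pairs S Y x))"
    by (intro card_UN_disjoint T(2)) auto
  also have "\<dots> = (\<Sum>x\<in>T. card (reaching_pairs S Y u))"
    using T(1) U u Y(2) by (intro sum.cong refl card_reaching_pairs_transpose) auto
  finally show ?thesis
    by simp
qed

lemma rooted_forests_times_eq_UN:
  "Y \<subseteq> V \<Longrightarrow> rooted_forests V E S \<times> Y = (\<Union>x\<in>S. reaching_pairs S Y x)"
  unfolding reaching_pairs_def using rooted_forestsD(3)[of _ V E S] by fastforce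

lemma card_rooted_forests_times:
  assumes U: "\<forall>x\<in>S. universal_vertex V E x" "finite S" and u: "u \<in> S"
    and Y: "Y \<subseteq> V" "\<And>x x' z. x \<in> S \<Longrightarrow> x' \<in> S \<Longrightarrow> transpose x x' z \<in> Y \<longleftrightarrow> z \<in> Y"
  shows "card (rooted_forests V E S) * card Y = card S * card (reaching_pairs S Y u)"
proof -
  have "card (rooted_forests V E S) * card Y = card (\<Union>x\<in>S. reaching_pairs S Y x)"
    by (simp add: card_cartesian_product flip: rooted_forests_times_eq_UN[OF Y(1)])
  also have "\<dots> = card S * card (reaching_pairs S Y u)"
    by (rule card_UN_reaching_pairs[OF U(1) subset_refl U(2) u Y])
  finally show ?thesis .
qed

lemma cut_pairs_eq_UN:
  assumes u: "u \<notin> R"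
  shows "{(q, y). q \<in> rooted_forests V E (insert u R) \<and> y \<in> V \<and> \<not> reaches q y u}
    = (\<Union>x\<in>R. reaching_pairs (insert u R) V x)"
  unfolding reaching_pairs_def
proof safe
  fix q y
  assume q: "q \<in> rooted_forests V E (insert u R)" and y: "y \<in> V" and nr: "\<not> reaches q y u"
  then obtain x where "x \<in> insert u R" "reaches q y x"
    using rooted_forestsD(3)[OF q y] by blast
  with q y nr
  show "(q, y) \<in> (\<Union>x\<in>R. {(q, y). q \<in> rooted_forests V E (insert u R) \<and> y \<in> V \<and> reaches q y x})"
    by auto
next
  fix q y x
  assume "x \<in> R" "q \<in> rooted_forests V E (insert u R)" "reaches q y x" "reaches q y u"
  then show False
    using rooted_forest_root_unique[of q V E "insert u R" x u y] u by auto
qed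

lemma card_rooted_forests_insert_universal:
  assumes U: "\<forall>x\<in>insert u R. universal_vertex V E x" and u: "u \<notin> R" and R: "finite R"
  shows "card (insert u R) * card (rooted_forests V E R)
    = card R * card V * card (rooted_forests V E (insert u R))"
proof -
  let ?S = "insert u R"
  let ?M = "card (reaching_pairs ?S V u)"
  have Y: "transpose x x' z \<in> V \<longleftrightarrow> z \<in> V" if "x \<in> ?S" "x' \<in> ?S" for x x' z
    using that U universal_vertex_in[of V E] by (intro transpose_in_iff) auto
  have "card (rooted_forests V E R) = card R * ?M"
    using card_rooted_forests_eq_card_cut[OF u] U cut_pairs_eq_UN[OF u]
      card_UN_reaching_pairs[OF U _ R _ _ Y] by auto
  then have "card ?S * card (rooted_forests V E R) = card R * (card ?S * ?M)"
    by simp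
  also have "card ?S * ?M = card (rooted_forests V E ?S) * card V"
    using card_rooted_forests_times[OF U _ insertI1 subset_refl Y] R by simp
  finally show ?thesis
    by (simp only: ac_simps)
qed

lemma card_rooted_forests_union_universal:
  assumes "finite D" "R \<inter> D = {}" "finite R" "\<forall>x\<in>R \<union> D. universal_vertex V E x"
  shows "card (R \<union> D) * card (rooted_forests V E R)
    = card R * card V ^ card D * card (rooted_forests V E (R \<union> D))"
  using assms
proof (induction D arbitrary: R)
  case empty
  then show ?case
    by simp
next
  case (insert d D)
  let ?n = "card V" and ?F = "\<lambda>R. card (rooted_forests V E R)"
  have d: "d \<notin> R" "R \<union> insert d D = insert d R \<union> D"
    using insert.prems(1) by auto
  have IH: "card (R \<union> insert d D) * ?F (insert d R)
      = card (insert d R) * ?n ^ card D * ?F (R \<union> insert d D)"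
    using insert.IH[of "insert d R"] insert.prems insert.hyps(2) d by auto
  have step: "card (insert d R) * ?F R = card R * ?n * ?F (insert d R)"
    using card_rooted_forests_insert_universal[OF _ d(1) insert.prems(2)] insert.prems(3) by auto
  have "card (insert d R) * (card (R \<union> insert d D) * ?F R)
      = card (R \<union> insert d D) * (card R * ?n * ?F (insert d R))"
    by (simp only: step flip: step mult.left_commute)
  also have "\<dots> = card R * ?n * (card (R \<union> insert d D) * ?F (insert d R))"
    by (simp only: ac_simps)
  also have "\<dots> = card (insert d R) * (card R * ?n ^ card (insert d D) * ?F (R \<union> insert d D))"
    using IH insert.hyps by (simp add: ac_simps)
  finally show ?case
    using insert.prems(2) by simp
qed

lemma card_universal_dvd_card_rooted_forests:
  assumes U: "\<forall>x\<in>U. universal_vertex V E x" "finite U" "U \<noteq> {}" and w: "w \<in> V" "w \<notin> U"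
  shows "card U dvd card (rooted_forests V E U)"
proof -
  obtain u where u: "u \<in> U"
    using U(3) by blast
  have "transpose x x' z \<in> {w} \<longleftrightarrow> z \<in> {w}" if "x \<in> U" "x' \<in> U" for x x' z
    using that w(2) by (auto simp: transpose_def)
  then have "card (rooted_forests V E U) * card {w} = card U * card (reaching_pairs U {w} u)"
    using w(1) by (intro card_rooted_forests_times[OF U(1,2) u]) auto
  then show ?thesis
    by simp
qed

section \<open>Spanning trees as forests with one root\<close>

definition tree_edges :: "'a \<Rightarrow> ('a \<Rightarrow> 'a) \<Rightarrow> 'a set set" where
  "tree_edges r p = (\<lambda>v. {v, p v}) ` (V - {r})"

lemma tree_edges_subset: "p \<in> rooted_forests V E {r} \<Longrightarrow> tree_edges r p \<subseteq> E"
  unfolding tree_edges_def using rooted_forestsD(2)[of _ V E] by blast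

lemma tree_edge_parent:
  assumes p: "p \<in> rooted_forests V E {r}" and e: "{z, y} \<in> tree_edges r p"
    and le: "depth r p y \<le> depth r p z"
  shows "y = p z"
proof -
  obtain x where x: "x \<in> V" "x \<noteq> r" "{z, y} = {x, p x}"
    using e unfolding tree_edges_def by blast
  have "z \<noteq> y"
    using e tree_edges_subset[OF p] edge_endpoints by blast
  with x(3) have "z = x \<and> y = p x \<or> z = p x \<and> y = x"
    by (auto simp: doubleton_eq_iff)
  then show ?thesis
    using depth_step[OF p x(1,2)] le by auto
qed

lemma tree_edges_acyclic:
  assumes p: "p \<in> rooted_forests V E {r}"
  shows "acyclic_graph (tree_edges r p)"
  unfolding acyclic_graph_def
proof
  assume "\<exists>cs. is_cycle (tree_edges r p) cs"
  then obtain cs where c: "is_cycle (tree_edges r p) cs"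
    by blast
  then have "cs \<noteq> []"
    unfolding is_cycle_def by auto
  text \<open>A deepest vertex of the cycle has two distinct neighbours on it, both of which would have to
    be its parent.\<close>
  have "Max (depth r p ` set cs) \<in> depth r p ` set cs"
    using \<open>cs \<noteq> []\<close> by (intro Max_in) auto
  then obtain z where z: "z \<in> set cs" "depth r p z = Max (depth r p ` set cs)"
    by (metis imageE)
  have deepest: "depth r p v \<le> depth r p z" if "v \<in> set cs" for v
    unfolding z(2) using that by (intro Max_ge) auto
  obtain x y where xy: "x \<noteq> y" "x \<in> set cs" "y \<in> set cs"
    "{z, x} \<in> tree_edges r p" "{z, y} \<in> tree_edges r p"
    using is_cycle_two_neighbours[OF c z(1)] by blast
  have "x = p z" "y = p z"
    using tree_edge_parent[OF p xy(4) deepest[OF xy(2)]] tree_edge_parent[OF p xy(5) deepest[OF xy(3)]]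
    by auto
  with xy(1) show False
    by simp
qed

lemma tree_edges_connected:
  assumes p: "p \<in> rooted_forests V E {r}" and r: "r \<in> V"
  shows "connected_graph V (tree_edges r p)"
  unfolding connected_graph_def
proof (intro conjI ballI)
  let ?R = "{(x, y). {x, y} \<in> tree_edges r p}"
  have step: "(z, p z) \<in> ?R\<^sup>*" for z
  proof (cases "z \<in> V - {r}")
    case True
    then have "(z, p z) \<in> ?R"
      unfolding tree_edges_def by blast
    then show ?thesis ..
  next
    case False
    then show ?thesis
      using rooted_forestsD(1)[OF p] by simp
  qed
  have to_root: "(v, r) \<in> ?R\<^sup>*" if "v \<in> V" for v
    using rooted_forestsD(3)[OF p that] reaches_imp_rtrancl[OF _ step] by blast
  have "sym ?R"
    unfolding sym_def by (auto simp: insert_commute)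
  then have from_root: "(r, v) \<in> ?R\<^sup>*" if "v \<in> V" for v
    using to_root[OF that] sym_rtrancl unfolding sym_def by blast
  show "V \<noteq> {}"
    using r by blast
  show "(a, b) \<in> ?R\<^sup>*" if "a \<in> V" "b \<in> V" for a b
    using to_root[OF that(1)] from_root[OF that(2)] by (rule rtrancl_trans)
qed

lemma tree_edges_inj:
  assumes p: "p \<in> rooted_forests V E {r}" and p': "p' \<in> rooted_forests V E {r}"
    and eq: "tree_edges r p = tree_edges r p'"
  shows "p = p'"
proof (rule ccontr)
  assume "p \<noteq> p'"
  then obtain v where v: "p v \<noteq> p' v"
    by blast
  let ?D = "\<lambda>z. z \<in> V - {r} \<and> p z \<noteq> p' z"
  text \<open>Where \<open>p\<close> and \<open>p'\<close> differ, the common edge \<open>{z, p' z}\<close> is oriented the other way by \<open>p\<close>,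
    so they differ again at \<open>p' z\<close>.\<close>
  have D_step: "?D (p' z)" if z: "?D z" for z
  proof -
    have "{z, p' z} \<in> tree_edges r p"
      using z eq unfolding tree_edges_def by blast
    then obtain x where x: "x \<in> V - {r}" "{z, p' z} = {x, p x}"
      unfolding tree_edges_def by blast
    with z have zx: "x = p' z" "z = p x"
      by (auto simp: doubleton_eq_iff)
    have "p' (p' z) \<noteq> z"
      using rooted_forest_no_2cycle[OF p'] z by blast
    moreover have "p' z \<in> V - {r}"
      using x(1) unfolding zx(1) .
    moreover have "p (p' z) = z"
      unfolding zx(1)[symmetric] using zx(2) by simp
    ultimately show ?thesis
      by simp
  qed
  have "?D v"
    using v rooted_forestsD(1)[OF p, of v] rooted_forestsD(1)[OF p', of v] by metis
  have "reaches p' v r"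
    using rooted_forestsD(3)[OF p'] \<open>?D v\<close> by auto
  then have "?D r"
    using \<open>?D v\<close> D_step by (rule reaches_invariant[where P = ?D])
  then show False
    by simp
qed

lemma connected_obtain_parent_map:
  assumes conn: "connected_graph V T" and TE: "T \<subseteq> E" and r: "r \<in> V"
  obtains p where "p \<in> rooted_forests V E {r}" "tree_edges r p \<subseteq> T"
proof -
  let ?R = "{(x, y). {x, y} \<in> T}"
  have walk: "\<exists>k. (v, r) \<in> ?R ^^ k" if "v \<in> V" for v
    using conn that r unfolding connected_graph_def rtrancl_power by blast
  define d where "d v = (LEAST k. (v, r) \<in> ?R ^^ k)" for v
  have closer: "\<exists>y. {v, y} \<in> T \<and> d y < d v" if v: "v \<in> V" "v \<noteq> r" for v
  proof -
    have path: "(v, r) \<in> ?R ^^ d v"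
      unfolding d_def using walk[OF v(1)] by (rule LeastI_ex)
    obtain n where n: "d v = Suc n"
      using path v(2) by (cases "d v") auto
    then obtain y where "(v, y) \<in> ?R" "(y, r) \<in> ?R ^^ n"
      using path relpow_Suc_D2 by metis
    moreover have "d y \<le> n"
      unfolding d_def by (rule Least_le) (fact calculation(2))
    ultimately show ?thesis
      using n by auto
  qed
  define p where "p v = (if v \<in> V - {r} then SOME y. {v, y} \<in> T \<and> d y < d v else v)" for v
  have p_edge: "{v, p v} \<in> T \<and> d (p v) < d v" if v: "v \<in> V - {r}" for v
    unfolding p_def using v someI_ex[OF closer] by simp
  have "p v \<in> V \<and> d (p v) < d v" if "v \<in> V" "v \<noteq> r" for v
    using p_edge[of v] TE edge_endpoints[of v "p v"] that by auto
  then have "reaches p v r" if "v \<in> V" for v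
    using that by (rule reaches_by_descent)
  then have "p \<in> rooted_forests V E {r}"
    using p_edge TE unfolding rooted_forests_def p_def by auto
  moreover have "tree_edges r p \<subseteq> T"
    unfolding tree_edges_def using p_edge by blast
  ultimately show ?thesis
    using that by blast
qed

lemma bij_betw_tree_edges_spanning_trees:
  assumes r: "r \<in> V"
  shows "bij_betw (tree_edges r) (rooted_forests V E {r}) {T. spanning_tree V E T}"
  unfolding bij_betw_def
proof
  show "inj_on (tree_edges r) (rooted_forests V E {r})"
    using tree_edges_inj by (intro inj_onI) blast
  have "spanning_tree V E (tree_edges r p)" if "p \<in> rooted_forests V E {r}" for p
    unfolding spanning_tree_def
    using tree_edges_subset tree_edges_connected tree_edges_acyclic that r by blast
  moreover have "T \<in> tree_edges r ` rooted_forests V E {r}" if T: "spanning_tree V E T" for T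
  proof -
    have conn: "connected_graph V T" and TE: "T \<subseteq> E" and acyc: "acyclic_graph T"
      using T unfolding spanning_tree_def by blast+
    obtain p where p: "p \<in> rooted_forests V E {r}" and sub: "tree_edges r p \<subseteq> T"
      using connected_obtain_parent_map[OF conn TE r] .
    have "e \<in> tree_edges r p" if e: "e \<in> T" for e
    proof -
      obtain a b where ab: "e = {a, b}" "a \<noteq> b" "a \<in> V" "b \<in> V"
        using edge_doubleton e TE by blast
      moreover have "(a, b) \<in> {(x, y). {x, y} \<in> tree_edges r p}\<^sup>*"
        using tree_edges_connected[OF p r] ab(3,4) unfolding connected_graph_def by blast
      ultimately show ?thesis
        using acyclic_edge_mem_subgraph[OF acyc sub] e by blast
    qed
    with sub p show ?thesis
      by blast
  qed
  ultimately show "tree_edges r ` rooted_forests V E {r} = {T. spanning_tree V E T}"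
    by blast
qed

lemma num_spanning_trees_eq_card_rooted_forests:
  "r \<in> V \<Longrightarrow> num_spanning_trees V E = card (rooted_forests V E {r})"
  unfolding num_spanning_trees_def
  using bij_betw_same_card[OF bij_betw_tree_edges_spanning_trees] by simp

end

theorem lemma3p2:
  fixes V :: "'a set" and E :: "'a set set" and n m :: nat
  assumes "simple_graph V E"
    and "card V = n"
    and "card {v \<in> V. universal_vertex V E v} = m"
    and "1 \<le> m" and "m < n"
  shows "n ^ (m - 1) dvd num_spanning_trees V E"
proof -
  interpret sgraph V E
    by (rule sgraph.intro) (fact assms(1))
  define U where "U = {v \<in> V. universal_vertex V E v}"
  have U: "\<forall>x\<in>U. universal_vertex V E x" "finite U" "U \<subseteq> V" "card U = m"
    unfolding U_def using finite_V assms(3) by auto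
  then obtain u where u: "u \<in> U"
    using assms(4) by fastforce
  obtain w where w: "w \<in> V" "w \<notin> U"
    using U(3,4) assms(2,5) by (metis card_mono finite_V leD subsetI subset_antisym)
  have "{u} \<union> (U - {u}) = U" "card (U - {u}) = m - 1"
    using u U(2,4) by auto
  then have "m * num_spanning_trees V E = n ^ (m - 1) * card (rooted_forests V E U)"
    using card_rooted_forests_union_universal[of "U - {u}" "{u}"] U(1,2)
      num_spanning_trees_eq_card_rooted_forests[of u] u U(3,4) assms(2) by auto
  moreover obtain k where "card (rooted_forests V E U) = m * k"
    using card_universal_dvd_card_rooted_forests[OF U(1,2) _ w] u U(4) by (auto elim: dvdE)
  ultimately have "num_spanning_trees V E = n ^ (m - 1) * k"
    using assms(4) by (simp add: algebra_simps)
  then show ?thesis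
    by simp
qed

end
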